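(* Let $A$ be a locally-complex Cayley--Dickson algebra and let $f(x)=x^n+a_{n-1}x^{n-1}+\dots+a_0\in A[x]$ be monic with $n\ge1$. Then $\mathrm{sn}(f)$ is a compact subset of $A$, and it is contained in the open ball centered at $0$ of radius $R_1(f)$, in the open ball centered at $0$ of radius $R_2(f)$, and in the closed ball centered at $0$ of radius $R_3(f)$, where $R_1(f)=\sqrt{1+\sum_{k=0}^{n-1}|a_k|^2}$, $R_2(f)=1+\max_{0\le k\le n-1}|a_k|$, $R_3(f)=\max\{1,\sum_{k=0}^{n-1}|a_k|\}$.
   Context: Real Cayley--Dickson algebras: $A_0=\mathbb{R}$ with identity involution, $A_{k+1}=A_k\{\gamma_k\}=A_k\times A_k$ with product $(a,b)(c,d)=(ac+\gamma_k\bar d b,\ da+b\bar c)$ and involution $\overline{(a,b)}=(\bar a,-b)$. A real unital algebra is locally-complex if every non-real element generates a subalgebra isomorphic to $\mathbb{C}$ (for Cayley--Dickson algebras: all $\gamma_k=-1$ up to isomorphism). Trace $\mathrm{tr}(\lambda)=\lambda+\bar\lambda$, norm $\mathrm{n}(\lambda)=\bar\lambda\lambda$, $|\lambda|=\sqrt{\mathrm{n}(\lambda)}$ (Euclidean norm; $A$ carries the Euclidean topology). For $I$ with trace $0$ and norm $1$, $\mathbb{C}_I=\mathbb{R}+\mathbb{R}I\cong\mathbb{C}$ and $\pi_I$ the orthogonal projection onto it. $A[x]=A\otimes_{\mathbb{R}}\mathbb{R}[x]$ with central $x$; for $f(x)=\sum_k a_kx^k$, $f_I(x)=\sum_k\pi_I(a_k)x^k$.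 If $f_I$ is non-constant, $K_{\mathbb{C}_I}(f_I)$ is the convex hull in $\mathbb{C}_I$ of the roots of $f_I$ in $\mathbb{C}_I$; otherwise $K_{\mathbb{C}_I}(f_I)=\mathbb{C}_I$. The Gauss--Lucas snail is $\mathrm{sn}(f)=\bigcup_I K_{\mathbb{C}_I}(f_I)$ over all $I$ with $\mathrm{tr}(I)=0$, $\mathrm{n}(I)=1$. *)

theory Defs
  imports "HOL-Analysis.Analysis"
begin

text \<open>Real Cayley--Dickson algebra A_k with all gamma_j = -1 (the locally-complex ones).
  Elements of A_k are represented as functions nat => real vanishing at all indices >= 2^k;
  the pair (a,b) in A_k x A_k is the vector whose first 2^k coordinates are a and next 2^k are b.\<close>

definition cd_carrier :: "nat \<Rightarrow> (nat \<Rightarrow> real) set" where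
  "cd_carrier k = {a. \<forall>i\<ge>2^k. a i = 0}"

definition cd_lo :: "nat \<Rightarrow> (nat \<Rightarrow> real) \<Rightarrow> (nat \<Rightarrow> real)" where
  "cd_lo k x = (\<lambda>i. if i < 2^k then x i else 0)"

definition cd_hi :: "nat \<Rightarrow> (nat \<Rightarrow> real) \<Rightarrow> (nat \<Rightarrow> real)" where
  "cd_hi k x = (\<lambda>i. if i < 2^k then x (i + 2^k) else 0)"

definition cd_join :: "nat \<Rightarrow> (nat \<Rightarrow> real) \<Rightarrow> (nat \<Rightarrow> real) \<Rightarrow> (nat \<Rightarrow> real)" where
  "cd_join k p q = (\<lambda>i. if i < 2^k then p i else if i < 2 * 2^k then q (i - 2^k) else 0)"

definition cd_add :: "(nat \<Rightarrow> real) \<Rightarrow> (nat \<Rightarrow> real) \<Rightarrow> (nat \<Rightarrow> real)" where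
  "cd_add a b = (\<lambda>i. a i + b i)"

definition cd_neg :: "(nat \<Rightarrow> real) \<Rightarrow> (nat \<Rightarrow> real)" where
  "cd_neg a = (\<lambda>i. - a i)"

definition cd_scale :: "real \<Rightarrow> (nat \<Rightarrow> real) \<Rightarrow> (nat \<Rightarrow> real)" where
  "cd_scale c a = (\<lambda>i. c * a i)"

definition cd_real :: "real \<Rightarrow> (nat \<Rightarrow> real)" where
  "cd_real r = (\<lambda>i. if i = 0 then r else 0)"

fun cd_conj :: "nat \<Rightarrow> (nat \<Rightarrow> real) \<Rightarrow> (nat \<Rightarrow> real)" where
  "cd_conj 0 a = cd_real (a 0)"
| "cd_conj (Suc k) a = cd_join k (cd_conj k (cd_lo k a)) (cd_neg (cd_hi k a))"

text \<open>Product: (a,b)(c,d) = (ac + gamma conj(d) b, da + b conj(c)) with gamma = -1.\<close>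
fun cd_mul :: "nat \<Rightarrow> (nat \<Rightarrow> real) \<Rightarrow> (nat \<Rightarrow> real) \<Rightarrow> (nat \<Rightarrow> real)" where
  "cd_mul 0 x y = cd_real (x 0 * y 0)"
| "cd_mul (Suc k) x y =
     (let a = cd_lo k x; b = cd_hi k x; c = cd_lo k y; d = cd_hi k y in
      cd_join k
        (cd_add (cd_mul k a c) (cd_scale (-1) (cd_mul k (cd_conj k d) b)))
        (cd_add (cd_mul k d a) (cd_mul k b (cd_conj k c))))"

fun cd_pow :: "nat \<Rightarrow> (nat \<Rightarrow> real) \<Rightarrow> nat \<Rightarrow> (nat \<Rightarrow> real)" where
  "cd_pow k z 0 = cd_real 1"
| "cd_pow k z (Suc j) = cd_mul k z (cd_pow k z j)"

text \<open>Trace and norm (as elements of A_k), and the modulus |lambda| = sqrt(n(lambda)).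
  n(lambda) = conj(lambda) lambda is a real element, so it equals its 0-th coordinate.\<close>
definition cd_tr :: "nat \<Rightarrow> (nat \<Rightarrow> real) \<Rightarrow> (nat \<Rightarrow> real)" where
  "cd_tr k a = cd_add a (cd_conj k a)"

definition cd_n :: "nat \<Rightarrow> (nat \<Rightarrow> real) \<Rightarrow> (nat \<Rightarrow> real)" where
  "cd_n k a = cd_mul k (cd_conj k a) a"

definition cd_abs :: "nat \<Rightarrow> (nat \<Rightarrow> real) \<Rightarrow> real" where
  "cd_abs k a = sqrt (cd_n k a 0)"

definition cd_units :: "nat \<Rightarrow> (nat \<Rightarrow> real) set" where
  "cd_units k = {I \<in> cd_carrier k. cd_tr k I = cd_real 0 \<and> cd_n k I = cd_real 1}"

definition cd_inner :: "nat \<Rightarrow> (nat \<Rightarrow> real) \<Rightarrow> (nat \<Rightarrow> real) \<Rightarrow> real" where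
  "cd_inner k a b = (\<Sum>i<2^k. a i * b i)"

definition cd_CI :: "nat \<Rightarrow> (nat \<Rightarrow> real) \<Rightarrow> (nat \<Rightarrow> real) set" where
  "cd_CI k I = {cd_add (cd_real x) (cd_scale y I) | x y. True}"

definition cd_proj :: "nat \<Rightarrow> (nat \<Rightarrow> real) \<Rightarrow> (nat \<Rightarrow> real) \<Rightarrow> (nat \<Rightarrow> real)" where
  "cd_proj k I a = cd_add (cd_scale (cd_inner k a (cd_real 1)) (cd_real 1))
                          (cd_scale (cd_inner k a I) I)"

text \<open>Evaluation of a polynomial sum_(j<=n) c_j x^j (x central) at z.\<close>
definition cd_poly_eval :: "nat \<Rightarrow> (nat \<Rightarrow> (nat \<Rightarrow> real)) \<Rightarrow> nat \<Rightarrow> (nat \<Rightarrow> real) \<Rightarrow> (nat \<Rightarrow> real)" where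
  "cd_poly_eval k c n z = (\<lambda>i. \<Sum>j\<le>n. cd_mul k (c j) (cd_pow k z j) i)"

definition monic_coeffs :: "(nat \<Rightarrow> (nat \<Rightarrow> real)) \<Rightarrow> nat \<Rightarrow> nat \<Rightarrow> (nat \<Rightarrow> real)" where
  "monic_coeffs a n j = (if j < n then a j else if j = n then cd_real 1 else (\<lambda>_. 0))"

definition cd_convex_hull :: "(nat \<Rightarrow> real) set \<Rightarrow> (nat \<Rightarrow> real) set" where
  "cd_convex_hull S = {(\<lambda>i. \<Sum>s\<in>F. t s * s i) | F t. finite F \<and> F \<subseteq> S \<and> F \<noteq> {} \<and>
       (\<forall>s\<in>F. 0 \<le> t s) \<and> (\<Sum>s\<in>F. t s) = 1}"

definition K_CI :: "nat \<Rightarrow> (nat \<Rightarrow> real) \<Rightarrow> (nat \<Rightarrow> (nat \<Rightarrow> real)) \<Rightarrow> nat \<Rightarrow> (nat \<Rightarrow> real) set" where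
  "K_CI k I c n =
     (let cI = (\<lambda>j. cd_proj k I (c j)) in
      if (\<exists>j\<in>{1..n}. cI j \<noteq> (\<lambda>_. 0))
      then cd_convex_hull {z \<in> cd_CI k I. cd_poly_eval k cI n z = (\<lambda>_. 0)}
      else cd_CI k I)"

definition snail :: "nat \<Rightarrow> (nat \<Rightarrow> (nat \<Rightarrow> real)) \<Rightarrow> nat \<Rightarrow> (nat \<Rightarrow> real) set" where
  "snail k c n = (\<Union>I\<in>cd_units k. K_CI k I c n)"

end

(*
  For a unit I the map w |-> Re w + (Im w) I is a multiplicative isometry of C onto C_I, and
  it turns f_I into the complex monic polynomial whose coefficients are the coordinates of
  pi_I(a_k) in the basis 1, I; by Bessel's inequality these have modulus at most |a_k|.
  The classical Cauchy-type bounds therefore put every root of every f_I into the three balls,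
  and since balls are convex, so is K(f_I).  For compactness: f_I has at most n roots, so sn(f)
  is the image of the compact set of triples (I, an n-tuple of roots of f_I, a point of the
  standard simplex) under the continuous map (I, w, t) |-> sum_j t_j w_j.
*)

theory Submission
  imports Defs
begin

section \<open>Cauchy-type bounds for the roots of monic polynomials\<close>

lemma norm_monic_root_pow_le:
  fixes c :: "nat \<Rightarrow> 'a::real_normed_div_algebra"
  assumes "\<And>j. j < n \<Longrightarrow> norm (c j) \<le> A j"
    and "w ^ n + (\<Sum>j<n. c j * w ^ j) = 0"
  shows "norm w ^ n \<le> (\<Sum>j<n. A j * norm w ^ j)"
proof -
  have "norm w ^ n = norm (\<Sum>j<n. c j * w ^ j)"
    using assms(2) by (metis add_eq_0_iff norm_minus_cancel norm_power)
  also have "\<dots> \<le> (\<Sum>j<n. norm (c j * w ^ j))"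
    by (rule norm_sum)
  also have "\<dots> \<le> (\<Sum>j<n. A j * norm w ^ j)"
    by (rule sum_mono) (simp add: norm_mult norm_power assms(1) mult_right_mono)
  finally show ?thesis .
qed

lemma norm_monic_root_lt_sqrt:
  fixes c :: "nat \<Rightarrow> 'a::real_normed_div_algebra"
  assumes "\<And>j. j < n \<Longrightarrow> norm (c j) \<le> A j"
    and "w ^ n + (\<Sum>j<n. c j * w ^ j) = 0"
  shows "norm w < sqrt (1 + (\<Sum>j<n. (A j)\<^sup>2))"
proof (rule ccontr)
  let ?r = "norm w" and ?T = "\<Sum>j<n. (A j)\<^sup>2"
  assume "\<not> ?r < sqrt (1 + ?T)"
  then have "(sqrt (1 + ?T))\<^sup>2 \<le> ?r\<^sup>2"
    by (intro power_mono) (simp_all add: sum_nonneg)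
  then have T: "?T \<le> ?r\<^sup>2 - 1"
    by (simp add: sum_nonneg)
  have "(?r ^ n)\<^sup>2 \<le> (\<Sum>j<n. A j * ?r ^ j)\<^sup>2"
    using norm_monic_root_pow_le [OF assms] by (intro power_mono) simp_all
  also have "\<dots> \<le> ?T * (\<Sum>j<n. (?r ^ j)\<^sup>2)"
    by (rule Cauchy_Schwarz_ineq_sum)
  also have "\<dots> = ?T * (\<Sum>j<n. (?r\<^sup>2) ^ j)"
    by (simp add: power_mult [symmetric] mult.commute)
  also have "\<dots> \<le> (?r\<^sup>2 - 1) * (\<Sum>j<n. (?r\<^sup>2) ^ j)"
    using T by (intro mult_right_mono sum_nonneg) simp_all
  also have "\<dots> = (?r\<^sup>2) ^ n - 1"
    by (simp add: power_diff_1_eq)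
  also have "(?r\<^sup>2) ^ n = (?r ^ n)\<^sup>2"
    by (simp add: power_mult [symmetric] mult.commute)
  finally show False by simp
qed

lemma norm_monic_root_lt_Max:
  fixes c :: "nat \<Rightarrow> 'a::real_normed_div_algebra"
  assumes "\<And>j. j < n \<Longrightarrow> norm (c j) \<le> A j"
    and "w ^ n + (\<Sum>j<n. c j * w ^ j) = 0"
  shows "norm w < 1 + Max (A ` {..<n})"
proof (rule ccontr)
  let ?r = "norm w"
  assume "\<not> ?r < 1 + Max (A ` {..<n})"
  then have "Max (A ` {..<n}) \<le> ?r - 1" by simp
  moreover have "A j \<le> Max (A ` {..<n})" if "j < n" for j
    using that by (intro Max_ge) auto
  ultimately have A: "A j \<le> ?r - 1" if "j < n" for j
    using that by (meson order_trans)
  have "?r ^ n \<le> (\<Sum>j<n. A j * ?r ^ j)"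
    by (rule norm_monic_root_pow_le [OF assms])
  also have "\<dots> \<le> (\<Sum>j<n. (?r - 1) * ?r ^ j)"
    by (intro sum_mono mult_right_mono) (simp_all add: A)
  also have "\<dots> = ?r ^ n - 1"
    by (simp add: power_diff_1_eq sum_distrib_left)
  finally show False by simp
qed

lemma norm_monic_root_le_sum:
  fixes c :: "nat \<Rightarrow> 'a::real_normed_div_algebra"
  assumes "\<And>j. j < n \<Longrightarrow> norm (c j) \<le> A j"
    and root: "w ^ n + (\<Sum>j<n. c j * w ^ j) = 0"
  shows "norm w \<le> max 1 (\<Sum>j<n. A j)"
proof (rule ccontr)
  let ?r = "norm w" and ?S = "\<Sum>j<n. A j"
  have "n \<noteq> 0"
  proof
    assume "n = 0"
    then show False using root by simp
  qed
  assume "\<not> ?r \<le> max 1 ?S"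
  then have r: "?r > 1" "?r > ?S" by auto
  have A: "0 \<le> A j" if "j < n" for j
    using assms(1) [OF that] norm_ge_zero order_trans by blast
  have "?r ^ n \<le> (\<Sum>j<n. A j * ?r ^ j)"
    by (rule norm_monic_root_pow_le [OF assms])
  also have "\<dots> \<le> (\<Sum>j<n. A j * ?r ^ (n - 1))"
    using r A by (intro sum_mono mult_left_mono power_increasing) auto
  also have "\<dots> = ?S * ?r ^ (n - 1)"
    by (simp add: sum_distrib_right)
  also have "\<dots> < ?r * ?r ^ (n - 1)"
    using r by (intro mult_strict_right_mono zero_less_power) auto
  also have "\<dots> = ?r ^ n"
    using \<open>n \<noteq> 0\<close> by (simp add: power_eq_if)
  finally show False by simp
qed

section \<open>Convex hulls of finite sets and compact products\<close>

lemma sum_lessThan_if_less: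
  fixes f :: "nat \<Rightarrow> 'a::comm_monoid_add"
  shows "m \<le> n \<Longrightarrow> (\<Sum>j<n. if j < m then f j else 0) = (\<Sum>j<m. f j)"
  by (induction n) (auto simp: less_Suc_eq_le le_Suc_eq)

lemma convex_hull_finite_obtain_indexed:
  fixes S :: "'a::real_vector set"
  assumes "finite S" "card S \<le> n" "x \<in> convex hull S"
  obtains v t where "\<And>j. v j \<in> S" "\<And>j. t j \<in> {0..1}" "(\<Sum>j<n. t j) = 1"
    "x = (\<Sum>j<n. t j *\<^sub>R v j)"
proof -
  let ?m = "card S"
  obtain u where u: "\<forall>y\<in>S. 0 \<le> u y" "sum u S = 1" "x = (\<Sum>y\<in>S. u y *\<^sub>R y)"
    using assms(3) by (auto simp: convex_hull_finite [OF assms(1)])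
  obtain h where h: "bij_betw h {0..<?m} S"
    using ex_bij_betw_nat_finite [OF assms(1)] by blast
  have "S \<noteq> {}" using u by auto
  then have "0 < ?m" using assms(1) by (simp add: card_gt_0_iff)
  define v where "v j = h (if j < ?m then j else 0)" for j
  define t where "t j = (if j < ?m then u (h j) else 0)" for j
  have "v j \<in> S" for j
    using h \<open>0 < ?m\<close> by (simp add: v_def bij_betw_apply)
  moreover have "t j \<in> {0..1}" for j
    using h u(1,2) member_le_sum [OF _ _ assms(1), of _ u] by (auto simp: t_def bij_betw_apply)
  moreover have "(\<Sum>j<n. t j) = 1"
    using u(2) assms(2) sum.reindex_bij_betw [OF h, of u]
    by (simp add: t_def sum_lessThan_if_less atLeast0LessThan)
  moreover have "x = (\<Sum>j<n. t j *\<^sub>R v j)"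
  proof -
    have "(\<Sum>j<n. t j *\<^sub>R v j) = (\<Sum>j<n. if j < ?m then u (h j) *\<^sub>R h j else 0)"
      by (intro sum.cong) (simp_all add: t_def v_def)
    also have "\<dots> = x"
      using u(3) assms(2) sum.reindex_bij_betw [OF h, of "\<lambda>y. u y *\<^sub>R y"]
      by (simp add: sum_lessThan_if_less atLeast0LessThan)
    finally show ?thesis ..
  qed
  ultimately show ?thesis using that by blast
qed

lemma compact_Pi_UNIV:
  fixes S :: "'a::topological_space set"
  assumes "compact S"
  shows "compact (Pi (UNIV :: 'i set) (\<lambda>_. S))"
proof -
  have "compactin (product_topology (\<lambda>_. euclidean) (UNIV :: 'i set)) (PiE UNIV (\<lambda>_. S))"
    using assms by (simp add: compactin_PiE)
  then show ?thesis
    by (simp add: euclidean_product_topology PiE_UNIV_domain)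
qed

section \<open>Arithmetic of the Cayley--Dickson algebras\<close>

lemma cd_join_carrier [simp]: "cd_join k p q \<in> cd_carrier (Suc k)"
  by (auto simp: cd_carrier_def cd_join_def)

lemma cd_lo_carrier [simp]: "cd_lo k x \<in> cd_carrier k"
  by (auto simp: cd_carrier_def cd_lo_def)

lemma cd_hi_carrier [simp]: "cd_hi k x \<in> cd_carrier k"
  by (auto simp: cd_carrier_def cd_hi_def)

lemma cd_real_carrier [simp]: "cd_real r \<in> cd_carrier k"
  by (auto simp: cd_carrier_def cd_real_def)

lemma cd_mul_carrier [simp]: "cd_mul k x y \<in> cd_carrier k"
  by (cases k) (auto simp: Let_def)

lemma cd_conj_carrier [simp]: "cd_conj k x \<in> cd_carrier k"
  by (cases k) auto

lemma cd_scale_carrier [simp]: "x \<in> cd_carrier k \<Longrightarrow> cd_scale r x \<in> cd_carrier k"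
  by (auto simp: cd_carrier_def cd_scale_def)

lemma cd_lo_join [simp]: "p \<in> cd_carrier k \<Longrightarrow> cd_lo k (cd_join k p q) = p"
  by (auto simp: cd_carrier_def cd_join_def cd_lo_def fun_eq_iff)

lemma cd_hi_join [simp]: "q \<in> cd_carrier k \<Longrightarrow> cd_hi k (cd_join k p q) = q"
  by (auto simp: cd_carrier_def cd_join_def cd_hi_def fun_eq_iff)

lemma cd_join_lo_hi: "x \<in> cd_carrier (Suc k) \<Longrightarrow> cd_join k (cd_lo k x) (cd_hi k x) = x"
  by (auto simp: cd_carrier_def cd_join_def cd_hi_def cd_lo_def fun_eq_iff)

lemma cd_lo_add [simp]: "cd_lo k (cd_add x y) = cd_add (cd_lo k x) (cd_lo k y)"
  by (auto simp: cd_add_def cd_lo_def fun_eq_iff)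

lemma cd_hi_add [simp]: "cd_hi k (cd_add x y) = cd_add (cd_hi k x) (cd_hi k y)"
  by (auto simp: cd_add_def cd_hi_def fun_eq_iff)

lemma cd_lo_scale [simp]: "cd_lo k (cd_scale r x) = cd_scale r (cd_lo k x)"
  by (auto simp: cd_scale_def cd_lo_def fun_eq_iff)

lemma cd_hi_scale [simp]: "cd_hi k (cd_scale r x) = cd_scale r (cd_hi k x)"
  by (auto simp: cd_scale_def cd_hi_def fun_eq_iff)

lemma cd_lo_real [simp]: "cd_lo k (cd_real r) = cd_real r"
  by (auto simp: cd_lo_def cd_real_def fun_eq_iff)

lemma cd_hi_real [simp]: "cd_hi k (cd_real r) = (\<lambda>_. 0)"
  by (auto simp: cd_hi_def cd_real_def fun_eq_iff)

lemma cd_join_add: "cd_add (cd_join k p q) (cd_join k p' q') = cd_join k (cd_add p p') (cd_add q q')"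
  by (auto simp: cd_add_def cd_join_def fun_eq_iff)

lemma cd_join_scale: "cd_scale r (cd_join k p q) = cd_join k (cd_scale r p) (cd_scale r q)"
  by (auto simp: cd_scale_def cd_join_def fun_eq_iff)

lemma cd_real_eq_iff [simp]: "cd_real a = cd_real b \<longleftrightarrow> a = b"
  by (auto simp: cd_real_def fun_eq_iff dest: spec[of _ 0])

lemma cd_add_real: "cd_add (cd_real a) (cd_real b) = cd_real (a + b)"
  by (auto simp: cd_add_def cd_real_def fun_eq_iff)

lemma cd_conj_add: "cd_conj k (cd_add x y) = cd_add (cd_conj k x) (cd_conj k y)"
proof (induction k arbitrary: x y)
  case 0
  then show ?case by (auto simp: cd_add_def cd_real_def fun_eq_iff)
next
  case (Suc k)
  then show ?case by (simp add: cd_join_add) (simp add: cd_add_def cd_neg_def fun_eq_iff)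
qed

lemma cd_conj_scale: "cd_conj k (cd_scale r x) = cd_scale r (cd_conj k x)"
proof (induction k arbitrary: x)
  case 0
  then show ?case by (auto simp: cd_scale_def cd_real_def fun_eq_iff)
next
  case (Suc k)
  then show ?case by (simp add: cd_join_scale) (simp add: cd_scale_def cd_neg_def fun_eq_iff)
qed

lemma cd_conj_real [simp]: "cd_conj k (cd_real r) = cd_real r"
proof (induction k)
  case 0
  then show ?case by (simp add: cd_real_def fun_eq_iff)
next
  case (Suc k)
  then have "cd_conj (Suc k) (cd_real r) = cd_join k (cd_real r) (cd_neg (\<lambda>_. 0))"
    by simp
  then show ?case by (simp add: cd_real_def cd_join_def cd_neg_def fun_eq_iff)
qed

lemma cd_conj_eq: "x \<in> cd_carrier k \<Longrightarrow> cd_conj k x = (\<lambda>i. if i = 0 then x 0 else - x i)"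
proof (induction k arbitrary: x)
  case 0
  then show ?case by (auto simp: cd_real_def cd_carrier_def fun_eq_iff)
next
  case (Suc k)
  from Suc.IH[OF cd_lo_carrier] Suc.prems show ?case
    by (auto simp: cd_join_def cd_lo_def cd_hi_def cd_neg_def cd_carrier_def fun_eq_iff)
qed

lemma cd_mul_add:
  "cd_mul k (cd_add x y) z = cd_add (cd_mul k x z) (cd_mul k y z)"
  "cd_mul k z (cd_add x y) = cd_add (cd_mul k z x) (cd_mul k z y)"
proof (induction k arbitrary: x y z)
  case 0
  show "cd_mul 0 (cd_add x y) z = cd_add (cd_mul 0 x z) (cd_mul 0 y z)"
    and "cd_mul 0 z (cd_add x y) = cd_add (cd_mul 0 z x) (cd_mul 0 z y)" for x y z
    by (auto simp: cd_add_def cd_real_def fun_eq_iff algebra_simps)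
next
  case (Suc k)
  show "cd_mul (Suc k) (cd_add x y) z = cd_add (cd_mul (Suc k) x z) (cd_mul (Suc k) y z)"
    and "cd_mul (Suc k) z (cd_add x y) = cd_add (cd_mul (Suc k) z x) (cd_mul (Suc k) z y)" for x y z
    by (simp_all add: Let_def Suc.IH cd_conj_add cd_join_add)
      (simp_all add: cd_add_def cd_scale_def fun_eq_iff algebra_simps)
qed

lemma cd_mul_scale:
  "cd_mul k (cd_scale r x) z = cd_scale r (cd_mul k x z)"
  "cd_mul k z (cd_scale r x) = cd_scale r (cd_mul k z x)"
proof (induction k arbitrary: x z)
  case 0
  show "cd_mul 0 (cd_scale r x) z = cd_scale r (cd_mul 0 x z)"
    and "cd_mul 0 z (cd_scale r x) = cd_scale r (cd_mul 0 z x)" for x z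
    by (auto simp: cd_scale_def cd_real_def fun_eq_iff algebra_simps)
next
  case (Suc k)
  show "cd_mul (Suc k) (cd_scale r x) z = cd_scale r (cd_mul (Suc k) x z)"
    and "cd_mul (Suc k) z (cd_scale r x) = cd_scale r (cd_mul (Suc k) z x)" for x z
    by (simp_all add: Let_def Suc.IH cd_conj_scale cd_join_scale)
      (simp_all add: cd_add_def cd_scale_def fun_eq_iff algebra_simps)
qed

lemma cd_conj_zero [simp]: "cd_conj k (\<lambda>_. 0) = (\<lambda>_. 0)"
  using cd_conj_scale [where r = 0 and x = "\<lambda>_. 0"] by (simp add: cd_scale_def)

lemma cd_mul_zero [simp]: "cd_mul k (\<lambda>_. 0) x = (\<lambda>_. 0)" "cd_mul k x (\<lambda>_. 0) = (\<lambda>_. 0)"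
  using cd_mul_scale [where r = 0 and x = "\<lambda>_. 0"] by (simp_all add: cd_scale_def)

lemma cd_mul_real:
  "x \<in> cd_carrier k \<Longrightarrow> cd_mul k (cd_real r) x = cd_scale r x"
  "x \<in> cd_carrier k \<Longrightarrow> cd_mul k x (cd_real r) = cd_scale r x"
proof (induction k arbitrary: x)
  case 0
  show "x \<in> cd_carrier 0 \<Longrightarrow> cd_mul 0 (cd_real r) x = cd_scale r x"
    and "x \<in> cd_carrier 0 \<Longrightarrow> cd_mul 0 x (cd_real r) = cd_scale r x" for x
    by (auto simp: cd_scale_def cd_real_def cd_carrier_def fun_eq_iff)
next
  case (Suc k)
  have "cd_mul (Suc k) (cd_real r) x = cd_join k (cd_scale r (cd_lo k x)) (cd_scale r (cd_hi k x))"
    and "cd_mul (Suc k) x (cd_real r) = cd_join k (cd_scale r (cd_lo k x)) (cd_scale r (cd_hi k x))"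
    for x
    by (simp_all add: Let_def Suc.IH) (simp_all add: cd_add_def cd_scale_def fun_eq_iff)
  then show "x \<in> cd_carrier (Suc k) \<Longrightarrow> cd_mul (Suc k) (cd_real r) x = cd_scale r x"
    and "x \<in> cd_carrier (Suc k) \<Longrightarrow> cd_mul (Suc k) x (cd_real r) = cd_scale r x" for x
    by (simp_all add: cd_join_scale [symmetric] cd_join_lo_hi)
qed

lemma sum_lessThan_double:
  fixes f :: "nat \<Rightarrow> 'a::comm_monoid_add"
  shows "(\<Sum>i<2 * m. f i) = (\<Sum>i<m. f i) + (\<Sum>i<m. f (i + m))"
proof -
  have "(\<Sum>i<2 * m. f i) = (\<Sum>i\<in>{0..<m}. f i) + (\<Sum>i\<in>{m..<m + m}. f i)"
    by (simp add: mult_2 lessThan_atLeast0 sum.atLeastLessThan_concat)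
  also have "(\<Sum>i\<in>{m..<m + m}. f i) = (\<Sum>i\<in>{0..<m}. f (i + m))"
    using sum.shift_bounds_nat_ivl [of f 0 m m] by simp
  finally show ?thesis by (simp add: lessThan_atLeast0)
qed

lemma cd_n_eq: "x \<in> cd_carrier k \<Longrightarrow> cd_n k x = cd_real (\<Sum>i<2^k. (x i)\<^sup>2)"
proof (induction k arbitrary: x)
  case 0
  then show ?case by (auto simp: cd_n_def cd_real_def cd_carrier_def fun_eq_iff power2_eq_square)
next
  case (Suc k)
  let ?a = "cd_lo k x" and ?b = "cd_hi k x"
  have neg: "cd_neg ?b = cd_scale (-1) ?b"
    by (simp add: cd_neg_def cd_scale_def fun_eq_iff)
  have "cd_n (Suc k) x = cd_join k (cd_add (cd_n k ?a) (cd_n k ?b)) (\<lambda>_. 0)"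
    unfolding cd_n_def
    by (simp add: Let_def neg cd_mul_scale cd_conj_scale) (simp add: cd_add_def cd_scale_def fun_eq_iff)
  also have "\<dots> = cd_join k (cd_real ((\<Sum>i<2^k. (?a i)\<^sup>2) + (\<Sum>i<2^k. (?b i)\<^sup>2))) (\<lambda>_. 0)"
    by (simp add: Suc.IH cd_add_real)
  also have "(\<Sum>i<2^k. (?a i)\<^sup>2) + (\<Sum>i<2^k. (?b i)\<^sup>2) = (\<Sum>i<2^Suc k. (x i)\<^sup>2)"
    using sum_lessThan_double [of "\<lambda>i. (x i)\<^sup>2" "2^k"] by (simp add: cd_lo_def cd_hi_def)
  finally show ?case by (simp add: cd_join_def cd_real_def fun_eq_iff)
qed

lemma cd_abs_eq: "x \<in> cd_carrier k \<Longrightarrow> cd_abs k x = sqrt (\<Sum>i<2^k. (x i)\<^sup>2)"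
  by (simp add: cd_abs_def cd_n_eq cd_real_def)

lemma cd_units_iff:
  "I \<in> cd_units k \<longleftrightarrow> I \<in> cd_carrier k \<and> I 0 = 0 \<and> (\<Sum>i<2^k. (I i)\<^sup>2) = 1"
proof -
  have "cd_tr k I = cd_real (2 * I 0)" if "I \<in> cd_carrier k"
    using that by (auto simp: cd_tr_def cd_add_def cd_conj_eq cd_real_def fun_eq_iff)
  then show ?thesis by (auto simp: cd_units_def cd_n_eq)
qed

section \<open>The complex slices\<close>

definition cd_of_complex :: "(nat \<Rightarrow> real) \<Rightarrow> complex \<Rightarrow> (nat \<Rightarrow> real)" where
  "cd_of_complex I w = cd_add (cd_real (Re w)) (cd_scale (Im w) I)"

text \<open>The coordinates of \<open>\<pi>\<^sub>I x\<close> with respect to the basis \<open>1, I\<close> of \<open>\<complex>\<^sub>I\<close>, and the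
  roots of the slice polynomial \<open>f\<^sub>I\<close> read in these coordinates.\<close>

definition slice_coeff :: "nat \<Rightarrow> (nat \<Rightarrow> real) \<Rightarrow> (nat \<Rightarrow> real) \<Rightarrow> complex" where
  "slice_coeff k I x = Complex (x 0) (cd_inner k x I)"

definition slice_roots ::
    "nat \<Rightarrow> (nat \<Rightarrow> real) \<Rightarrow> (nat \<Rightarrow> nat \<Rightarrow> real) \<Rightarrow> nat \<Rightarrow> complex set" where
  "slice_roots k I c n = {w. (\<Sum>j\<le>n. slice_coeff k I (c j) * w ^ j) = 0}"

lemma cd_of_complex_apply: "cd_of_complex I w i = Re w * cd_real 1 i + Im w * I i"
  by (simp add: cd_of_complex_def cd_add_def cd_scale_def cd_real_def)

lemma cd_of_complex_carrier [simp]: "I \<in> cd_carrier k \<Longrightarrow> cd_of_complex I w \<in> cd_carrier k"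
  by (auto simp: cd_carrier_def cd_of_complex_apply cd_real_def)

lemma cd_of_complex_scaleR: "cd_of_complex I (r *\<^sub>R w) i = r * cd_of_complex I w i"
  by (simp add: cd_of_complex_apply algebra_simps)

lemma cd_of_complex_sum: "cd_of_complex I (\<Sum>j\<in>S. f j) = (\<lambda>i. \<Sum>j\<in>S. cd_of_complex I (f j) i)"
  by (simp add: cd_of_complex_apply fun_eq_iff sum.distrib sum_distrib_right)

lemma cd_CI_eq: "cd_CI k I = range (cd_of_complex I)"
proof
  show "cd_CI k I \<subseteq> range (cd_of_complex I)"
  proof
    fix z assume "z \<in> cd_CI k I"
    then obtain x y where "z = cd_add (cd_real x) (cd_scale y I)"
      by (auto simp: cd_CI_def)
    then have "z = cd_of_complex I (Complex x y)"
      by (simp add: cd_of_complex_def)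
    then show "z \<in> range (cd_of_complex I)" by blast
  qed
  show "range (cd_of_complex I) \<subseteq> cd_CI k I"
    unfolding cd_CI_def cd_of_complex_def by blast
qed

locale cd_imag_unit =
  fixes k :: nat and I :: "nat \<Rightarrow> real"
  assumes imag_unit: "I \<in> cd_units k"
begin

lemma carrier [simp]: "I \<in> cd_carrier k"
  and real_part [simp]: "I 0 = 0"
  and sum_squares: "(\<Sum>i<2^k. (I i)\<^sup>2) = 1"
  using imag_unit by (simp_all add: cd_units_iff)

lemma cd_conj_unit: "cd_conj k I = cd_scale (-1) I"
  by (simp add: cd_conj_eq cd_scale_def fun_eq_iff)

lemma cd_mul_unit_unit: "cd_mul k I I = cd_real (-1)"
proof -
  have "cd_scale (-1) (cd_mul k I I) = cd_real 1"
    using imag_unit by (simp add: cd_units_def cd_n_def cd_conj_unit cd_mul_scale)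
  then have "cd_scale (-1) (cd_scale (-1) (cd_mul k I I)) = cd_scale (-1) (cd_real 1)"
    by simp
  then show ?thesis by (simp add: cd_scale_def cd_real_def fun_eq_iff)
qed

lemma cd_mul_of_complex: "cd_mul k (cd_of_complex I u) (cd_of_complex I v) = cd_of_complex I (u * v)"
  unfolding cd_of_complex_def
  by (simp add: cd_mul_add cd_mul_scale cd_mul_real cd_mul_unit_unit)
    (simp add: cd_add_def cd_scale_def cd_real_def fun_eq_iff algebra_simps)

lemma cd_pow_of_complex: "cd_pow k (cd_of_complex I w) j = cd_of_complex I (w ^ j)"
proof (induction j)
  case 0
  then show ?case by (simp add: cd_of_complex_apply cd_real_def fun_eq_iff)
next
  case (Suc j)
  then show ?case by (simp add: cd_mul_of_complex)
qed

lemma cd_conj_of_complex: "cd_conj k (cd_of_complex I w) = cd_of_complex I (cnj w)"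
  unfolding cd_of_complex_def
  by (simp add: cd_conj_add cd_conj_scale cd_conj_unit) (simp add: cd_add_def cd_scale_def fun_eq_iff)

lemma cd_abs_of_complex: "cd_abs k (cd_of_complex I w) = cmod w"
proof -
  have "cd_n k (cd_of_complex I w) = cd_of_complex I (cnj w * w)"
    by (simp add: cd_n_def cd_conj_of_complex cd_mul_of_complex)
  then have "cd_n k (cd_of_complex I w) 0 = (Re w)\<^sup>2 + (Im w)\<^sup>2"
    by (simp add: cd_of_complex_apply cd_real_def power2_eq_square)
  then show ?thesis by (simp add: cd_abs_def cmod_def)
qed

lemma cd_of_complex_eq_0_iff: "cd_of_complex I w = (\<lambda>_. 0) \<longleftrightarrow> w = 0"
proof
  assume w: "cd_of_complex I w = (\<lambda>_. 0)"
  then have "cd_of_complex I w 0 = 0" by simp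
  then have "Re w = 0" by (simp add: cd_of_complex_apply cd_real_def)
  moreover have "Im w = 0"
  proof (rule ccontr)
    assume "Im w \<noteq> 0"
    then have "\<forall>i. I i = 0"
      using w \<open>Re w = 0\<close> by (auto simp: cd_of_complex_apply fun_eq_iff)
    then show False using sum_squares by simp
  qed
  ultimately show "w = 0" by (simp add: complex_eq_iff)
qed (simp add: cd_of_complex_apply cd_real_def fun_eq_iff)

lemma inj_cd_of_complex: "inj (cd_of_complex I)"
proof (rule injI)
  fix u v assume "cd_of_complex I u = cd_of_complex I v"
  then have "cd_of_complex I (u - v) = (\<lambda>_. 0)"
    by (auto simp: cd_of_complex_apply fun_eq_iff algebra_simps dest!: fun_cong)
  then show "u = v" by (simp add: cd_of_complex_eq_0_iff)
qed

lemma cd_proj_eq: "cd_proj k I x = cd_of_complex I (slice_coeff k I x)"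
proof -
  have "cd_inner k x (cd_real 1) = x 0"
    by (simp add: cd_inner_def cd_real_def if_distrib cong: if_cong)
  then show ?thesis
    by (simp add: cd_proj_def cd_of_complex_def slice_coeff_def)
      (auto simp: cd_add_def cd_scale_def cd_real_def fun_eq_iff)
qed

lemma slice_coeff_real [simp]: "slice_coeff k I (cd_real r) = of_real r"
proof -
  have "cd_inner k (cd_real r) I = (\<Sum>i<2^k. if i = 0 then r * I i else 0)"
    unfolding cd_inner_def by (rule sum.cong) (auto simp: cd_real_def)
  then show ?thesis by (simp add: slice_coeff_def cd_real_def complex_eq_iff)
qed

lemma norm_slice_coeff_le:
  assumes "x \<in> cd_carrier k"
  shows "cmod (slice_coeff k I x) \<le> cd_abs k x"
proof -
  let ?S = "{..<(2::nat)^k} - {0}"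
  have 0: "(0::nat) \<in> {..<2^k}" by simp
  have inner: "cd_inner k x I = (\<Sum>i\<in>?S. x i * I i)"
    unfolding cd_inner_def using sum.remove [OF _ 0, of "\<lambda>i. x i * I i"] by simp
  have unit: "(\<Sum>i\<in>?S. (I i)\<^sup>2) = 1"
    using sum.remove [OF _ 0, of "\<lambda>i. (I i)\<^sup>2"] sum_squares by simp
  have abs: "(cd_abs k x)\<^sup>2 = (x 0)\<^sup>2 + (\<Sum>i\<in>?S. (x i)\<^sup>2)"
    using assms sum.remove [OF _ 0, of "\<lambda>i. (x i)\<^sup>2"] by (simp add: cd_abs_eq sum_nonneg)
  have "(\<Sum>i\<in>?S. x i * I i)\<^sup>2 \<le> (\<Sum>i\<in>?S. (x i)\<^sup>2) * (\<Sum>i\<in>?S. (I i)\<^sup>2)"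
    by (rule Cauchy_Schwarz_ineq_sum)
  then have "(cmod (slice_coeff k I x))\<^sup>2 \<le> (cd_abs k x)\<^sup>2"
    by (simp add: slice_coeff_def cmod_power2 inner unit abs)
  then show ?thesis
    by (rule power2_le_imp_le) (simp add: cd_abs_eq [OF assms] sum_nonneg)
qed

lemma cd_convex_hull_image_subset:
  "cd_convex_hull (cd_of_complex I ` W) \<subseteq> cd_of_complex I ` (convex hull W)"
proof
  fix z assume "z \<in> cd_convex_hull (cd_of_complex I ` W)"
  then obtain F t where z: "z = (\<lambda>i. \<Sum>s\<in>F. t s * s i)" and "finite F"
    and F: "F \<subseteq> cd_of_complex I ` W" and t: "\<forall>s\<in>F. 0 \<le> t s" "(\<Sum>s\<in>F. t s) = 1"
    unfolding cd_convex_hull_def by blast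
  define G where "G = {w \<in> W. cd_of_complex I w \<in> F}"
  have inj: "inj_on (cd_of_complex I) G"
    using inj_cd_of_complex by (simp add: inj_on_def inj_def)
  have FG: "F = cd_of_complex I ` G"
    using F by (auto simp: G_def)
  have "finite G"
    using \<open>finite F\<close> FG inj finite_imageD by blast
  have sum_F: "(\<Sum>s\<in>F. g s) = (\<Sum>w\<in>G. g (cd_of_complex I w))" for g :: "_ \<Rightarrow> real"
    by (simp add: FG sum.reindex [OF inj])
  have "(\<Sum>w\<in>G. t (cd_of_complex I w) *\<^sub>R w) \<in> convex hull W"
  proof (rule convex_sum)
    show "(\<Sum>w\<in>G. t (cd_of_complex I w)) = 1"
      using t(2) by (simp add: sum_F)
    show "0 \<le> t (cd_of_complex I w)" if "w \<in> G" for w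
      using t(1) that by (simp add: G_def)
    show "w \<in> convex hull W" if "w \<in> G" for w
      using that by (simp add: G_def hull_inc)
  qed (simp_all add: \<open>finite G\<close>)
  moreover have "z = cd_of_complex I (\<Sum>w\<in>G. t (cd_of_complex I w) *\<^sub>R w)"
    unfolding z sum_F cd_of_complex_sum cd_of_complex_scaleR ..
  ultimately show "z \<in> cd_of_complex I ` (convex hull W)" by blast
qed

lemma image_convex_hull_subset_cd_convex_hull:
  "cd_of_complex I ` (convex hull W) \<subseteq> cd_convex_hull (cd_of_complex I ` W)"
proof
  fix z assume "z \<in> cd_of_complex I ` (convex hull W)"
  then obtain S u where "finite S" "S \<subseteq> W" and u: "\<forall>w\<in>S. 0 \<le> u w" "sum u S = 1"
    and z: "z = cd_of_complex I (\<Sum>w\<in>S. u w *\<^sub>R w)"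
    unfolding convex_hull_explicit by blast
  let ?F = "cd_of_complex I ` S" and ?t = "u \<circ> inv (cd_of_complex I)"
  have sum_F: "(\<Sum>s\<in>?F. g s) = (\<Sum>w\<in>S. g (cd_of_complex I w))" for g :: "_ \<Rightarrow> real"
    using inj_cd_of_complex by (simp add: sum.reindex inj_on_subset)
  have "S \<noteq> {}" using u by auto
  moreover have "z = (\<lambda>i. \<Sum>s\<in>?F. ?t s * s i)"
    by (simp only: z sum_F o_apply inv_f_f [OF inj_cd_of_complex] cd_of_complex_sum
        cd_of_complex_scaleR)
  ultimately show "z \<in> cd_convex_hull (cd_of_complex I ` W)"
    unfolding cd_convex_hull_def using \<open>finite S\<close> \<open>S \<subseteq> W\<close> u
    by (intro CollectI exI [of _ ?F] exI [of _ ?t]) (auto simp: sum_F inv_f_f [OF inj_cd_of_complex])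
qed

lemma cd_convex_hull_image: "cd_convex_hull (cd_of_complex I ` W) = cd_of_complex I ` (convex hull W)"
  by (intro equalityI cd_convex_hull_image_subset image_convex_hull_subset_cd_convex_hull)

lemma K_CI_eq:
  assumes "n \<ge> 1" and "slice_coeff k I (c n) \<noteq> 0"
  shows "K_CI k I c n = cd_of_complex I ` (convex hull slice_roots k I c n)"
proof -
  let ?cI = "\<lambda>j. cd_proj k I (c j)"
  have eval: "cd_poly_eval k ?cI n (cd_of_complex I w)
      = cd_of_complex I (\<Sum>j\<le>n. slice_coeff k I (c j) * w ^ j)" for w
    by (simp add: cd_poly_eval_def cd_proj_eq cd_pow_of_complex cd_mul_of_complex cd_of_complex_sum)
  have "?cI n \<noteq> (\<lambda>_. 0)"
    using assms(2) by (simp add: cd_proj_eq cd_of_complex_eq_0_iff)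
  then have "\<exists>j\<in>{1..n}. ?cI j \<noteq> (\<lambda>_. 0)"
    using assms(1) by auto
  moreover have "{z \<in> cd_CI k I. cd_poly_eval k ?cI n z = (\<lambda>_. 0)}
      = cd_of_complex I ` slice_roots k I c n"
    by (auto simp: cd_CI_eq eval cd_of_complex_eq_0_iff slice_roots_def)
  ultimately show ?thesis
    by (simp add: K_CI_def cd_convex_hull_image)
qed

lemma slice_roots_monic:
  "w \<in> slice_roots k I (monic_coeffs a n) n \<longleftrightarrow> w ^ n + (\<Sum>j<n. slice_coeff k I (a j) * w ^ j) = 0"
  by (simp add: slice_roots_def monic_coeffs_def lessThan_Suc_atMost [symmetric] add.commute
      cong: if_cong)

end

lemma snail_monic_eq:
  assumes "n \<ge> 1"
  shows "snail k (monic_coeffs a n) n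
    = (\<Union>I\<in>cd_units k. cd_of_complex I ` (convex hull slice_roots k I (monic_coeffs a n) n))"
proof -
  have "K_CI k I (monic_coeffs a n) n
      = cd_of_complex I ` (convex hull slice_roots k I (monic_coeffs a n) n)"
    if "I \<in> cd_units k" for I
  proof -
    interpret cd_imag_unit k I using that by unfold_locales
    show ?thesis using assms by (intro K_CI_eq) (simp_all add: monic_coeffs_def)
  qed
  then show ?thesis by (simp add: snail_def)
qed

section \<open>Bounds and compactness of the snail\<close>

lemma slice_roots_monic_subset:
  assumes "I \<in> cd_units k" and "\<forall>j<n. a j \<in> cd_carrier k"
  shows "slice_roots k I (monic_coeffs a n) n \<subseteq> ball 0 (sqrt (1 + (\<Sum>j<n. (cd_abs k (a j))\<^sup>2)))"
    and "slice_roots k I (monic_coeffs a n) n \<subseteq> ball 0 (1 + Max ((\<lambda>j. cd_abs k (a j)) ` {..<n}))"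
    and "slice_roots k I (monic_coeffs a n) n \<subseteq> cball 0 (max 1 (\<Sum>j<n. cd_abs k (a j)))"
proof -
  interpret cd_imag_unit k I using assms(1) by unfold_locales
  have coeff: "norm (slice_coeff k I (a j)) \<le> cd_abs k (a j)" if "j < n" for j
    using assms(2) that by (simp add: norm_slice_coeff_le)
  have root: "w ^ n + (\<Sum>j<n. slice_coeff k I (a j) * w ^ j) = 0"
    if "w \<in> slice_roots k I (monic_coeffs a n) n" for w
    using that by (simp add: slice_roots_monic)
  show "slice_roots k I (monic_coeffs a n) n \<subseteq> ball 0 (sqrt (1 + (\<Sum>j<n. (cd_abs k (a j))\<^sup>2)))"
    using norm_monic_root_lt_sqrt [OF coeff root] by auto
  show "slice_roots k I (monic_coeffs a n) n \<subseteq> ball 0 (1 + Max ((\<lambda>j. cd_abs k (a j)) ` {..<n}))"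
    using norm_monic_root_lt_Max [OF coeff root] by auto
  show "slice_roots k I (monic_coeffs a n) n \<subseteq> cball 0 (max 1 (\<Sum>j<n. cd_abs k (a j)))"
    using norm_monic_root_le_sum [OF coeff root] by auto
qed

lemma snail_monic_subset:
  assumes "n \<ge> 1" and "convex S"
    and "\<And>I. I \<in> cd_units k \<Longrightarrow> slice_roots k I (monic_coeffs a n) n \<subseteq> S"
    and "\<And>w. w \<in> S \<Longrightarrow> P (cmod w)"
  shows "snail k (monic_coeffs a n) n \<subseteq> {z \<in> cd_carrier k. P (cd_abs k z)}"
proof
  fix z assume "z \<in> snail k (monic_coeffs a n) n"
  then obtain I w where I: "I \<in> cd_units k" and z: "z = cd_of_complex I w"
    and w: "w \<in> convex hull slice_roots k I (monic_coeffs a n) n"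
    using snail_monic_eq [OF assms(1)] by auto
  interpret cd_imag_unit k I using I by unfold_locales
  have "w \<in> S"
    using w hull_minimal [where S = convex, OF assms(3) [OF I] assms(2)] by blast
  then show "z \<in> {z \<in> cd_carrier k. P (cd_abs k z)}"
    using assms(4) by (simp add: z cd_abs_of_complex)
qed

lemma closed_cd_carrier: "closed (cd_carrier k)"
proof -
  have "cd_carrier k = (\<Inter>i\<in>{2^k..}. {a. a i = 0})"
    by (auto simp: cd_carrier_def)
  then show ?thesis
    by (simp add: closed_INT closed_Collect_eq)
qed

lemma compact_cd_units: "compact (cd_units k)"
proof -
  have bounded: "I i \<in> {-1..1}" if "I \<in> cd_units k" for I i
  proof (cases "i < 2^k")
    case True
    have "(I i)\<^sup>2 \<le> (\<Sum>i<2^k. (I i)\<^sup>2)"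
      by (rule member_le_sum) (use True in auto)
    then show ?thesis
      using that by (simp add: cd_units_iff abs_square_le_1 abs_le_iff)
  next
    case False
    then show ?thesis
      using that by (simp add: cd_units_iff cd_carrier_def)
  qed
  have "cd_units k = cd_carrier k \<inter> {I. I 0 = 0} \<inter> {I. (\<Sum>i<2^k. (I i)\<^sup>2) = 1}"
    by (auto simp: cd_units_iff)
  also have "closed \<dots>"
    by (intro closed_Int closed_cd_carrier closed_Collect_eq continuous_intros) simp_all
  finally have "compact (Pi UNIV (\<lambda>_. {-1..1}) \<inter> cd_units k)"
    by (intro compact_Int_closed compact_Pi_UNIV) simp_all
  moreover have "Pi UNIV (\<lambda>_. {-1..1}) \<inter> cd_units k = cd_units k"
    using bounded by auto
  ultimately show ?thesis by simp
qed

lemma continuous_on_slice_coeff [continuous_intros]: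
  assumes "\<And>i. continuous_on S (\<lambda>p. f p i)"
  shows "continuous_on S (\<lambda>p. slice_coeff k (f p) x)"
  unfolding slice_coeff_def cd_inner_def Complex_eq by (intro continuous_intros assms)

lemma continuous_on_cd_of_complex [continuous_intros]:
  assumes "\<And>i. continuous_on S (\<lambda>p. f p i)" and "continuous_on S g"
  shows "continuous_on S (\<lambda>p. cd_of_complex (f p) (g p))"
  by (intro continuous_on_coordinatewise_then_product)
    (simp add: cd_of_complex_apply, intro continuous_intros assms)

type_synonym snail_param = "(nat \<Rightarrow> real) \<times> (nat \<Rightarrow> complex) \<times> (nat \<Rightarrow> real)"

text \<open>The bound \<open>R\<close> on the roots only serves to make the parameter set compact.\<close>

definition snail_params :: "nat \<Rightarrow> (nat \<Rightarrow> nat \<Rightarrow> real) \<Rightarrow> nat \<Rightarrow> real \<Rightarrow> snail_param set" where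
  "snail_params k c n R = (cd_units k \<times> Pi UNIV (\<lambda>_. cball 0 R) \<times> Pi UNIV (\<lambda>_. {0..1}))
    \<inter> (\<Inter>j<n. {p. fst (snd p) j \<in> slice_roots k (fst p) c n}) \<inter> {p. (\<Sum>j<n. snd (snd p) j) = 1}"

definition snail_point :: "nat \<Rightarrow> snail_param \<Rightarrow> (nat \<Rightarrow> real)" where
  "snail_point n p = cd_of_complex (fst p) (\<Sum>j<n. snd (snd p) j *\<^sub>R fst (snd p) j)"

lemma continuous_on_snail_param_coordinates:
  "continuous_on S (\<lambda>p::snail_param. fst p i)"
  "continuous_on S (\<lambda>p::snail_param. fst (snd p) i)"
  "continuous_on S (\<lambda>p::snail_param. snd (snd p) i)"
  by (rule continuous_on_product_then_coordinatewise,
      intro continuous_on_fst continuous_on_snd continuous_on_id)+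

lemma compact_snail_params: "compact (snail_params k c n R)"
proof -
  note coord = continuous_on_snail_param_coordinates
  have "closed (\<Inter>j<n. {p::snail_param. fst (snd p) j \<in> slice_roots k (fst p) c n})"
    unfolding slice_roots_def mem_Collect_eq
    by (intro closed_INT ballI closed_Collect_eq continuous_intros coord)
  moreover have "closed {p::snail_param. (\<Sum>j<n. snd (snd p) j) = 1}"
    by (intro closed_Collect_eq continuous_on_sum continuous_on_const coord(3))
  ultimately show ?thesis
    unfolding snail_params_def
    by (intro compact_Int_closed compact_Times compact_cd_units compact_Pi_UNIV compact_cball
        compact_Icc)
qed

lemma continuous_on_snail_point: "continuous_on S (snail_point n)"
  unfolding snail_point_def
  by (intro continuous_on_cd_of_complex continuous_on_sum continuous_on_scaleR
      continuous_on_snail_param_coordinates)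

lemma snail_monic_eq_image:
  assumes "n \<ge> 1"
    and roots: "\<And>I. I \<in> cd_units k \<Longrightarrow> slice_roots k I (monic_coeffs a n) n \<subseteq> cball 0 R"
  shows "snail k (monic_coeffs a n) n = snail_point n ` snail_params k (monic_coeffs a n) n R"
proof
  let ?roots = "\<lambda>I. slice_roots k I (monic_coeffs a n) n"
  show "snail_point n ` snail_params k (monic_coeffs a n) n R \<subseteq> snail k (monic_coeffs a n) n"
  proof
    fix z assume "z \<in> snail_point n ` snail_params k (monic_coeffs a n) n R"
    then obtain I w t where p: "(I, w, t) \<in> snail_params k (monic_coeffs a n) n R"
      and z: "z = snail_point n (I, w, t)"
      by (metis prod_cases3 imageE)
    from p have I: "I \<in> cd_units k" and w: "\<And>j. j < n \<Longrightarrow> w j \<in> ?roots I"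
      and t: "\<And>j. 0 \<le> t j" "(\<Sum>j<n. t j) = 1"
      by (auto simp: snail_params_def)
    have "(\<Sum>j<n. t j *\<^sub>R w j) \<in> convex hull ?roots I"
      by (rule convex_sum) (simp_all add: t hull_inc w)
    then show "z \<in> snail k (monic_coeffs a n) n"
      using I by (auto simp: snail_monic_eq [OF assms(1)] z snail_point_def)
  qed
  show "snail k (monic_coeffs a n) n \<subseteq> snail_point n ` snail_params k (monic_coeffs a n) n R"
  proof
    fix z assume "z \<in> snail k (monic_coeffs a n) n"
    then obtain I x where I: "I \<in> cd_units k" and z: "z = cd_of_complex I x"
      and x: "x \<in> convex hull ?roots I"
      using snail_monic_eq [OF assms(1)] by auto
    interpret cd_imag_unit k I using I by unfold_locales
    have "\<exists>j\<le>n. slice_coeff k I (monic_coeffs a n j) \<noteq> 0"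
      by (intro exI [of _ n]) (simp add: monic_coeffs_def)
    then have "finite (?roots I) \<and> card (?roots I) \<le> n"
      unfolding slice_roots_def by (rule polyfun_rootbound)
    then obtain w t where w: "\<And>j. w j \<in> ?roots I" and t: "\<And>j. t j \<in> {0..1}"
      "(\<Sum>j<n. t j) = 1" and x_eq: "x = (\<Sum>j<n. t j *\<^sub>R w j)"
      using convex_hull_finite_obtain_indexed x by blast
    have "w j \<in> cball 0 R" for j
      using w roots [OF I] by blast
    then have "(I, w, t) \<in> snail_params k (monic_coeffs a n) n R"
      using I w t by (simp add: snail_params_def)
    moreover have "z = snail_point n (I, w, t)"
      by (simp add: snail_point_def z x_eq)
    ultimately show "z \<in> snail_point n ` snail_params k (monic_coeffs a n) n R" by blast
  qed
qed

lemma compact_snail_monic: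
  assumes "n \<ge> 1"
    and "\<And>I. I \<in> cd_units k \<Longrightarrow> slice_roots k I (monic_coeffs a n) n \<subseteq> cball 0 R"
  shows "compact (snail k (monic_coeffs a n) n)"
proof -
  have "compact (snail_point n ` snail_params k (monic_coeffs a n) n R)"
    by (intro compact_continuous_image continuous_on_snail_point compact_snail_params)
  then show ?thesis by (simp only: snail_monic_eq_image [OF assms])
qed

theorem theorem4p10:
  fixes k n :: nat and a :: "nat \<Rightarrow> (nat \<Rightarrow> real)"
  assumes "n \<ge> 1"
    and "\<forall>j<n. a j \<in> cd_carrier k"
  shows "compact (snail k (monic_coeffs a n) n)
    \<and> snail k (monic_coeffs a n) n
        \<subseteq> {z \<in> cd_carrier k. cd_abs k z < sqrt (1 + (\<Sum>j<n. (cd_abs k (a j))\<^sup>2))}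
    \<and> snail k (monic_coeffs a n) n
        \<subseteq> {z \<in> cd_carrier k. cd_abs k z < 1 + Max ((\<lambda>j. cd_abs k (a j)) ` {..<n})}
    \<and> snail k (monic_coeffs a n) n
        \<subseteq> {z \<in> cd_carrier k. cd_abs k z \<le> max 1 (\<Sum>j<n. cd_abs k (a j))}"
proof -
  note bounds = slice_roots_monic_subset [OF _ assms(2)]
  have "compact (snail k (monic_coeffs a n) n)"
    by (rule compact_snail_monic [OF assms(1) bounds(3)])
  moreover have "snail k (monic_coeffs a n) n
      \<subseteq> {z \<in> cd_carrier k. cd_abs k z < sqrt (1 + (\<Sum>j<n. (cd_abs k (a j))\<^sup>2))}"
    using snail_monic_subset [OF assms(1) convex_ball bounds(1)] by simp
  moreover have "snail k (monic_coeffs a n) n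
      \<subseteq> {z \<in> cd_carrier k. cd_abs k z < 1 + Max ((\<lambda>j. cd_abs k (a j)) ` {..<n})}"
    using snail_monic_subset [OF assms(1) convex_ball bounds(2)] by simp
  moreover have "snail k (monic_coeffs a n) n
      \<subseteq> {z \<in> cd_carrier k. cd_abs k z \<le> max 1 (\<Sum>j<n. cd_abs k (a j))}"
    using snail_monic_subset [OF assms(1) convex_cball bounds(3)] by simp
  ultimately show ?thesis by blast
qed

end
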